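(* For every $x\in(0,1/2]$, $$4x(1-x)\log_2\!\left(\frac{1}{x(1-x)}\right)\ \ge\ x\,G(1/x)\ \ge\ x(1-x)\left(4+\log\frac{1}{4x(1-x)}\right),$$ $$2x\log_2(1/x)\ \ge\ x\,G(1/x)\ \ge\ x\left(2+\log\frac{1}{2x}\right),$$ and $\displaystyle\lim_{x\to0^+}\frac{G(1/x)}{\log(1/x)}=1$.
   Context: $\log$ is the natural logarithm. $G:[2,\infty)\to\mathbb{R}$ is defined by $G(2)=2$ and, for $x\in(0,1/2)$, $G(1/x)=\dfrac{\gamma^2e^{\gamma}}{e^{\gamma}(\gamma-1)+1}$, where $\gamma>0$ is the unique solution of $x=\dfrac{e^{\gamma}(\gamma-1)+1}{(e^{\gamma}-1)^2}$. *)

theory Defs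
  imports "HOL-Analysis.Analysis"
begin

definition phi :: "real \<Rightarrow> real" where
  "phi g = (exp g * (g - 1) + 1) / (exp g - 1)^2"

text \<open>G : [2,oo) -> R.  G 2 = 2, and for x in (0,1/2), G(1/x) = g^2 e^g / (e^g (g-1) + 1)
  where g > 0 is the unique solution of x = phi g.  Values below 2 are irrelevant.\<close>
definition G :: "real \<Rightarrow> real" where
  "G y = (if y = 2 then 2
          else (let g = (THE g. g > 0 \<and> 1 / y = phi g)
                in g^2 * exp g / (exp g * (g - 1) + 1)))"

end

theory Submission
  imports Defs "HOL-Real_Asymp.Real_Asymp"
begin

text \<open>
  Since phi decreases from 1/2 to 0 on (0,oo), every x in (0,1/2) is phi g for a unique g > 0, and
  then x G(1/x) = g^2 e^g / (e^g - 1)^2.  This value is the minimum over h > 0 of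
  psi x h = h x + h / (e^h - 1), whose derivative in h is x - phi h.  Evaluating psi at
  h = 2 ln (1/(2x)) gives the upper bound 2x log_2 (1/x), and at h = L + ln L with L = ln (1/x)
  it gives G(1/x) \<le> L + ln L + o(1).
  The lower bound x(1-x)(4 + ln (1/(4x(1-x)))) says that a certain function of g is nonnegative;
  it vanishes as g \<rightarrow> 0, and its derivative is, after substituting g = 2t, a positive multiple of a
  combination of t^a cosh (kt) and t^a sinh (kt) whose Taylor coefficients are all nonnegative.
  The two remaining bounds are elementary comparisons of the bounding functions.
\<close>

lemma exp_sub_one_sub_pos:
  fixes g :: real assumes "g \<noteq> 0" shows "0 < exp g - 1 - g"
  using exp_minus_greater[of "-g"] assms by simp

lemma exp_mult_sub_one_add_one_pos:
  fixes g :: real assumes "g \<noteq> 0" shows "0 < exp g * (g - 1) + 1"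
proof -
  have "exp g * (1 - g) < exp g * exp (-g)"
    using exp_minus_greater[of g] assms by simp
  then show ?thesis by (simp add: exp_minus algebra_simps)
qed

lemma exp_minus_one_less_half: "exp (-1) < (1/2 :: real)"
  using exp_minus_greater[of "-1"] by (simp add: exp_minus field_simps)

lemma two_mul_exp_sub_one_less:
  fixes g :: real assumes "0 < g" shows "2 * (exp g - 1) < g * (exp g + 1)"
proof -
  let ?k = "\<lambda>y. y * (exp y + 1) - 2 * (exp y - 1)"
  have "?k 0 < ?k g"
  proof (rule DERIV_pos_imp_increasing_open[OF assms])
    fix y :: real assume "0 < y"
    have "(?k has_real_derivative exp y * (y - 1) + 1) (at y)"
      by (rule derivative_eq_intros refl | simp add: algebra_simps)+
    then show "\<exists>z. (?k has_real_derivative z) (at y) \<and> 0 < z"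
      using exp_mult_sub_one_add_one_pos[of y] \<open>0 < y\<close> by auto
  qed (intro continuous_intros)
  then show ?thesis by simp
qed

section \<open>The function phi\<close>

lemma phi_pos: "0 < g \<Longrightarrow> 0 < phi g"
  using exp_mult_sub_one_add_one_pos[of g] by (simp add: phi_def)

lemma phi_has_derivative:
  assumes "g \<noteq> 0"
  shows "(phi has_real_derivative - exp g * (g * (exp g + 1) - 2 * (exp g - 1)) / (exp g - 1)^3) (at g)"
proof -
  have nz: "(exp g - 1)^2 \<noteq> 0" using assms by simp
  show ?thesis
    unfolding phi_def[abs_def]
    apply (rule derivative_eq_intros refl nz)+
    using nz apply (simp add: divide_simps)
    apply algebra
    done
qed

lemma phi_strict_antimono: assumes "0 < a" "a < b" shows "phi b < phi a"
proof (rule DERIV_neg_imp_decreasing[OF assms(2)])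
  fix g assume "a \<le> g" "g \<le> b"
  then have "0 < g" using assms by simp
  have "0 < exp g * (g * (exp g + 1) - 2 * (exp g - 1))"
    using two_mul_exp_sub_one_less[OF \<open>0 < g\<close>] by simp
  moreover have "0 < (exp g - 1)^3" using \<open>0 < g\<close> by simp
  ultimately show "\<exists>y. (phi has_real_derivative y) (at g) \<and> y < 0"
    using phi_has_derivative[of g] \<open>0 < g\<close> by (auto intro!: divide_pos_pos)
qed

lemma phi_inj: "0 < g \<Longrightarrow> 0 < h \<Longrightarrow> phi g = phi h \<Longrightarrow> g = h"
  using phi_strict_antimono[of g h] phi_strict_antimono[of h g] by (cases g h rule: linorder_cases) auto

lemma phi_tendsto_at_right_0: "(phi \<longlongrightarrow> 1/2) (at_right 0)"
  unfolding phi_def by real_asymp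

lemma phi_tendsto_at_top: "(phi \<longlongrightarrow> 0) at_top"
  unfolding phi_def by real_asymp

lemma phi_less_half: assumes "0 < g" shows "phi g < 1/2"
proof -
  have "\<forall>\<^sub>F y in at_right 0. phi (g/2) \<le> phi y"
    using assms unfolding eventually_at_right_field
    by (auto intro!: exI[of _ "g/2"] less_imp_le phi_strict_antimono)
  then have "phi (g/2) \<le> 1/2"
    by (intro tendsto_lowerbound[OF phi_tendsto_at_right_0]) auto
  then show ?thesis using phi_strict_antimono[of "g/2" g] assms by simp
qed

lemma phi_surj: assumes "0 < x" "x < 1/2" obtains g where "0 < g" "phi g = x"
proof -
  obtain c where "0 < c" and c: "\<And>y. 0 < y \<Longrightarrow> y < c \<Longrightarrow> x < phi y"
    using order_tendstoD(1)[OF phi_tendsto_at_right_0, of x] assms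
    unfolding eventually_at_right_field by auto
  define a where "a = c / 2"
  have a: "0 < a" "x < phi a" using \<open>0 < c\<close> c[of a] by (auto simp: a_def)
  obtain N where N: "\<And>y. N \<le> y \<Longrightarrow> phi y < x"
    using order_tendstoD(2)[OF phi_tendsto_at_top, of x] assms
    unfolding eventually_at_top_linorder by auto
  define b where "b = max N (a + 1)"
  have b: "a < b" "phi b < x" using N[of b] by (auto simp: b_def)
  have "\<forall>g. a \<le> g \<and> g \<le> b \<longrightarrow> isCont phi g"
    using a(1) by (auto intro!: DERIV_isCont[OF phi_has_derivative])
  then obtain g where "a \<le> g" "phi g = x"
    using IVT2[of phi b x a] a b by auto
  with a(1) show ?thesis using that[of g] by simp
qed

lemma G_inverse_phi:
  assumes "0 < g" shows "G (1 / phi g) = g^2 * exp g / (exp g * (g - 1) + 1)"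
proof -
  have "(THE h. 0 < h \<and> 1 / (1 / phi g) = phi h) = g"
    using assms phi_inj by (intro the_equality) auto
  moreover have "1 / phi g \<noteq> 2" using phi_less_half[OF assms] phi_pos[OF assms] by (auto simp: field_simps)
  ultimately show ?thesis by (simp add: G_def)
qed

section \<open>G as a minimum\<close>

definition psi :: "real \<Rightarrow> real \<Rightarrow> real" where
  "psi x h = h * x + h / (exp h - 1)"

lemma psi_has_derivative:
  assumes "h \<noteq> 0" shows "(psi x has_real_derivative x - phi h) (at h)"
proof -
  have nz: "exp h - 1 \<noteq> 0" using assms by simp
  show ?thesis
    unfolding psi_def[abs_def] phi_def
    apply (rule derivative_eq_intros refl nz)+
    using nz apply (simp add: divide_simps)
    apply algebra
    done
qed

lemma psi_phi_self:
  assumes "g \<noteq> 0" shows "psi (phi g) g = g^2 * exp g / (exp g - 1)^2"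
  using assms unfolding psi_def phi_def by (simp add: divide_simps) algebra

lemma phi_mult_G_inverse_phi: assumes "0 < g" shows "phi g * G (1 / phi g) = psi (phi g) g"
proof -
  have "0 < exp g * (g - 1) + 1" using exp_mult_sub_one_add_one_pos assms by simp
  then have "phi g * (g^2 * exp g / (exp g * (g - 1) + 1)) = g^2 * exp g / (exp g - 1)^2"
    by (simp add: phi_def)
  then show ?thesis using psi_phi_self assms by (simp add: G_inverse_phi)
qed

lemma psi_phi_minimal:
  assumes "0 < g" "0 < h" shows "psi (phi g) g \<le> psi (phi g) h"
proof (cases "g \<le> h")
  case True
  show ?thesis
  proof (rule DERIV_nonneg_imp_increasing_open[OF True])
    fix y assume "g < y" "y < h"
    then show "\<exists>z. (psi (phi g) has_real_derivative z) (at y) \<and> 0 \<le> z"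
      using psi_has_derivative[of y] phi_strict_antimono[of g y] assms by force
  next
    show "continuous_on {g..h} (psi (phi g))"
      using assms by (intro continuous_at_imp_continuous_on ballI DERIV_isCont[OF psi_has_derivative]) auto
  qed
next
  case False
  show ?thesis
  proof (rule DERIV_nonpos_imp_decreasing_open[of h g])
    fix y assume "h < y" "y < g"
    then show "\<exists>z. (psi (phi g) has_real_derivative z) (at y) \<and> z \<le> 0"
      using psi_has_derivative[of y] phi_strict_antimono[of y g] assms by force
  next
    show "continuous_on {h..g} (psi (phi g))"
      using assms by (intro continuous_at_imp_continuous_on ballI DERIV_isCont[OF psi_has_derivative]) auto
  qed (use False in auto)
qed

lemma G_le_psi:
  assumes "0 < x" "x < 1/2" "0 < h" shows "x * G (1 / x) \<le> psi x h"
proof -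
  obtain g where "0 < g" "phi g = x" using phi_surj assms by blast
  then show ?thesis using phi_mult_G_inverse_phi psi_phi_minimal assms(3) by metis
qed

section \<open>Upper bounds\<close>

lemma ln_le_half_sub_inverse: fixes y :: real assumes "1 \<le> y" shows "ln y \<le> (y - 1/y) / 2"
proof -
  let ?f = "\<lambda>y. (y - 1/y) / 2 - ln y"
  have "?f 1 \<le> ?f y"
  proof (rule DERIV_nonneg_imp_increasing_open[OF assms])
    fix z :: real assume "1 < z"
    have "(?f has_real_derivative (z - 1)^2 / (2 * z^2)) (at z)"
      using \<open>1 < z\<close> by (auto intro!: derivative_eq_intros simp: power2_eq_square field_simps)
    then show "\<exists>w. (?f has_real_derivative w) (at z) \<and> 0 \<le> w" by force
  qed (intro continuous_intros; auto)
  then show ?thesis by simp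
qed

lemma psi_two_ln_le:
  assumes "0 < x" "x < 1/2" shows "psi x (2 * ln (1 / (2 * x))) \<le> 2 * x * log 2 (1 / x)"
proof -
  define l where "l = ln (1 / (2 * x))"
  have "0 < l" using assms by (simp add: l_def)
  have "exp (2 * l) = exp l ^ 2" by (simp add: exp_double[symmetric] mult.commute)
  then have exp_2l: "exp (2 * l) = 1 / (4 * x^2)"
    using assms by (simp add: l_def power2_eq_square)
  have "x^2 < (1/2)^2" using assms by (intro power_strict_mono) auto
  then have q: "0 < 1 - 4 * x^2" by (simp add: power2_eq_square)
  have "l \<le> (1 / (2 * x) - 2 * x) / 2"
    using ln_le_half_sub_inverse[of "1 / (2 * x)"] assms by (simp add: l_def)
  then have "4 * x * l / (1 - 4 * x^2) \<le> 1" using q assms by (simp add: field_simps power2_eq_square)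
  moreover have "l \<le> l / ln 2" using \<open>0 < l\<close> ln_2_less_1 by (simp add: field_simps)
  moreover have "psi x (2 * l) = 2 * x * (l + 4 * x * l / (1 - 4 * x^2))"
    using q assms by (simp add: psi_def exp_2l) (simp add: field_simps power2_eq_square)
  ultimately have "psi x (2 * l) \<le> 2 * x * (l / ln 2 + 1)"
    using assms by simp
  also have "\<dots> = 2 * x * log 2 (1 / x)"
    using assms by (simp add: l_def log_def ln_div ln_mult field_simps)
  finally show ?thesis by (simp add: l_def)
qed

lemma upper_bounds_ordered:
  fixes x :: real assumes "0 < x" "x \<le> 1/2"
  shows "2 * x * log 2 (1 / x) \<le> 4 * x * (1 - x) * log 2 (1 / (x * (1 - x)))"
proof -
  have "2 * x * log 2 (1 / x) \<le> 4 * x * (1 - x) * log 2 (1 / x)"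
    using assms by (intro mult_right_mono) (auto simp: algebra_simps)
  also have "\<dots> \<le> 4 * x * (1 - x) * log 2 (1 / (x * (1 - x)))"
    using assms by (intro mult_left_mono) (auto simp: field_simps)
  finally show ?thesis .
qed

section \<open>A power series with nonnegative coefficients\<close>

definition cosh_coeff :: "nat \<Rightarrow> real \<Rightarrow> nat \<Rightarrow> real" where
  "cosh_coeff a k n = (if a \<le> n \<and> even (n - a) then k ^ (n - a) / fact (n - a) else 0)"

definition sinh_coeff :: "nat \<Rightarrow> real \<Rightarrow> nat \<Rightarrow> real" where
  "sinh_coeff a k n = (if a \<le> n \<and> odd (n - a) then k ^ (n - a) / fact (n - a) else 0)"

lemma sums_shift_power:
  fixes f :: "nat \<Rightarrow> real"
  assumes "(\<lambda>n. f n * t ^ n) sums s" "\<And>n. n < a \<Longrightarrow> f' n = 0" "\<And>n. f' (n + a) = f n"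
  shows "(\<lambda>n. f' n * t ^ n) sums (t ^ a * s)"
proof -
  have "(\<lambda>n. f' (n + a) * t ^ (n + a)) sums (t ^ a * s)"
    using sums_mult[OF assms(1), of "t ^ a"] by (simp add: assms(3) power_add algebra_simps)
  then have "(\<lambda>n. f' n * t ^ n) sums (t ^ a * s + (\<Sum>n<a. f' n * t ^ n))"
    using sums_iff_shift[of "\<lambda>n. f' n * t ^ n" a] by simp
  then show ?thesis using assms(2) by simp
qed

lemma sums_cosh_coeff: "(\<lambda>n. cosh_coeff a k n * t ^ n) sums (t ^ a * cosh (k * t))"
proof (rule sums_shift_power)
  have "(\<lambda>n. (if even n then k ^ n / fact n else 0) * t ^ n) = (\<lambda>n. if even n then (k * t) ^ n /\<^sub>R fact n else 0)"
    by (auto simp: fun_eq_iff power_mult_distrib divide_inverse_commute)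
  then show "(\<lambda>n. (if even n then k ^ n / fact n else 0) * t ^ n) sums cosh (k * t)"
    using cosh_converges[of "k * t"] by simp
qed (simp_all add: cosh_coeff_def)

lemma sums_sinh_coeff: "(\<lambda>n. sinh_coeff a k n * t ^ n) sums (t ^ a * sinh (k * t))"
proof (rule sums_shift_power)
  have "(\<lambda>n. (if odd n then k ^ n / fact n else 0) * t ^ n) = (\<lambda>n. if even n then 0 else (k * t) ^ n /\<^sub>R fact n)"
    by (auto simp: fun_eq_iff power_mult_distrib divide_inverse_commute)
  then show "(\<lambda>n. (if odd n then k ^ n / fact n else 0) * t ^ n) sums sinh (k * t)"
    using sinh_converges[of "k * t"] by simp
qed (simp_all add: sinh_coeff_def)

lemma cosh_of_nat_mult: "cosh (of_nat k * t) = (exp t ^ k + 1 / exp t ^ k) / (2::real)"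
  unfolding cosh_def exp_minus exp_of_nat_mult by (simp add: inverse_eq_divide)

lemma sinh_of_nat_mult: "sinh (of_nat k * t) = (exp t ^ k - 1 / exp t ^ k) / (2::real)"
  unfolding sinh_def exp_minus exp_of_nat_mult by (simp add: inverse_eq_divide)

definition gap_kernel :: "real \<Rightarrow> real" where
  "gap_kernel t = - cosh (5 * t) + 3 * cosh (3 * t) - 2 * cosh t
     + t * sinh (5 * t) + 11 * t * sinh (3 * t) - 38 * t * sinh t
     - 24 * t^2 * cosh (3 * t) + 24 * t^2 * cosh t + 20 * t^3 * sinh (3 * t) + 4 * t^3 * sinh t
     - 8 * t^4 * cosh (3 * t) - 8 * t^4 * cosh t"

definition gap_kernel_coeff :: "nat \<Rightarrow> real" where
  "gap_kernel_coeff n = - cosh_coeff 0 5 n + 3 * cosh_coeff 0 3 n - 2 * cosh_coeff 0 1 n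
     + sinh_coeff 1 5 n + 11 * sinh_coeff 1 3 n - 38 * sinh_coeff 1 1 n
     - 24 * cosh_coeff 2 3 n + 24 * cosh_coeff 2 1 n + 20 * sinh_coeff 3 3 n + 4 * sinh_coeff 3 1 n
     - 8 * cosh_coeff 4 3 n - 8 * cosh_coeff 4 1 n"

lemma sums_gap_kernel: "(\<lambda>n. gap_kernel_coeff n * t ^ n) sums gap_kernel t"
proof -
  note cc = sums_cosh_coeff[of _ _ t] and sc = sums_sinh_coeff[of _ _ t]
  have "(\<lambda>n. - (cosh_coeff 0 5 n * t^n) + 3 * (cosh_coeff 0 3 n * t^n) - 2 * (cosh_coeff 0 1 n * t^n)
      + sinh_coeff 1 5 n * t^n + 11 * (sinh_coeff 1 3 n * t^n) - 38 * (sinh_coeff 1 1 n * t^n)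
      - 24 * (cosh_coeff 2 3 n * t^n) + 24 * (cosh_coeff 2 1 n * t^n)
      + 20 * (sinh_coeff 3 3 n * t^n) + 4 * (sinh_coeff 3 1 n * t^n)
      - 8 * (cosh_coeff 4 3 n * t^n) - 8 * (cosh_coeff 4 1 n * t^n)) sums
     (- (t^0 * cosh (5*t)) + 3 * (t^0 * cosh (3*t)) - 2 * (t^0 * cosh (1*t))
      + t^1 * sinh (5*t) + 11 * (t^1 * sinh (3*t)) - 38 * (t^1 * sinh (1*t))
      - 24 * (t^2 * cosh (3*t)) + 24 * (t^2 * cosh (1*t))
      + 20 * (t^3 * sinh (3*t)) + 4 * (t^3 * sinh (1*t))
      - 8 * (t^4 * cosh (3*t)) - 8 * (t^4 * cosh (1*t)))"
    by (rule sums_diff sums_add sums_mult sums_minus cc sc)+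
  then show ?thesis by (simp add: gap_kernel_def gap_kernel_coeff_def algebra_simps)
qed

text \<open>For even m this is (m + 4)! times the coefficient of t^(m+4) in gap_kernel.\<close>

definition gap_kernel_coeff_num :: "nat \<Rightarrow> real" where
  "gap_kernel_coeff_num m = (let n = real m + 4 in
     125 * 5^m * (real m - 1)
     + 3^m * (243 + 297 * n - 216 * n * (n - 1) + 60 * n * (n - 1) * (n - 2)
              - 8 * n * (n - 1) * (n - 2) * (n - 3))
     + (-2 - 38 * n + 24 * n * (n - 1) + 4 * n * (n - 1) * (n - 2) - 8 * n * (n - 1) * (n - 2) * (n - 3)))"

lemma gap_kernel_coeff_less_4: assumes "n < 4" shows "gap_kernel_coeff n = 0"
proof -
  have "n \<in> {0, 1, 2, 3}" using assms by auto
  then show ?thesis by (auto simp: gap_kernel_coeff_def cosh_coeff_def sinh_coeff_def)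
qed

lemma gap_kernel_coeff_odd: "odd m \<Longrightarrow> gap_kernel_coeff (m + 4) = 0"
  by (simp add: gap_kernel_coeff_def cosh_coeff_def sinh_coeff_def)

lemma gap_kernel_coeff_even:
  assumes "even m" shows "gap_kernel_coeff (m + 4) = gap_kernel_coeff_num m / fact (m + 4)"
proof -
  have fact_shift: "fact (m + 4) = (real m + 4) * (real m + 3) * (real m + 2) * (real m + 1) * fact m"
    "fact (m + 3) = (real m + 3) * (real m + 2) * (real m + 1) * fact m"
    "fact (m + 2) = (real m + 2) * (real m + 1) * fact m"
    "fact (m + 1) = (real m + 1) * (fact m :: real)"
    by (simp_all add: fact_Suc numeral_eq_Suc algebra_simps)
  have nz: "real m + 1 \<noteq> 0" "real m + 2 \<noteq> 0" "real m + 3 \<noteq> 0" "real m + 4 \<noteq> 0"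
    "(fact m :: real) \<noteq> 0" by auto
  have shift: "m + 4 - 1 = m + 3" "m + 4 - 2 = m + 2" "m + 4 - 3 = m + 1" "m + 4 - 4 = m" by auto
  show ?thesis using assms
    unfolding gap_kernel_coeff_def cosh_coeff_def sinh_coeff_def gap_kernel_coeff_num_def Let_def shift
    apply (simp add: fact_shift power_add)
    apply (simp add: divide_simps nz)
    apply (simp add: algebra_simps)
    done
qed

lemma five_pow_dominates:
  "14 \<le> m \<Longrightarrow> 17 * 3^m * (real m + 4)^4 \<le> 125 * 5^m * (real m - 1)"
proof (induction m rule: nat_induct_at_least)
  case (Suc m)
  have "real m + 5 \<le> 19/18 * (real m + 4)" using Suc by simp
  then have "(real m + 5)^4 \<le> (19/18 * (real m + 4))^4" by (rule power_mono) simp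
  also have "\<dots> = (19/18)^4 * (real m + 4)^4" by (rule power_mult_distrib)
  also have "\<dots> \<le> 5/3 * (real m + 4)^4" by (rule mult_right_mono) (simp_all add: power_divide)
  finally have "3 * (real m + 5)^4 \<le> 5 * (real m + 4)^4" by simp
  then have "17 * 3^Suc m * (real (Suc m) + 4)^4 \<le> 5 * (17 * 3^m * (real m + 4)^4)"
    by (simp add: add.commute)
  also have "\<dots> \<le> 5 * (125 * 5^m * (real m - 1))" using Suc.IH by linarith
  also have "\<dots> \<le> 125 * 5^Suc m * (real (Suc m) - 1)" by simp
  finally show ?case .
qed simp

lemma gap_kernel_coeff_num_nonneg:
  assumes "even m" shows "0 \<le> gap_kernel_coeff_num m"
proof (cases "m \<le> 13")
  case True
  with assms have "m \<in> {0, 2, 4, 6, 8, 10, 12}" by auto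
  then show ?thesis by (auto simp: gap_kernel_coeff_num_def)
next
  case False
  define n where "n = real m + 4"
  have n: "18 \<le> n" using False by (simp add: n_def)
  define C where "C = 243 + 297 * n - 216 * n * (n - 1) + 60 * n * (n - 1) * (n - 2)
      - 8 * n * (n - 1) * (n - 2) * (n - 3)"
  define Q where "Q = -2 - 38 * n + 24 * n * (n - 1) + 4 * n * (n - 1) * (n - 2)
      - 8 * n * (n - 1) * (n - 2) * (n - 3)"
  have "C + 8 * n^4 = n^2 * (108 * n - 484) + 681 * n + 243"
    by (simp add: C_def algebra_simps power2_eq_square power4_eq_xxxx)
  moreover have "0 \<le> n^2 * (108 * n - 484)" using n by simp
  ultimately have "-8 * n^4 \<le> C" using n by linarith
  then have "-8 * (3^m * n^4) \<le> 3^m * C"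
    using mult_left_mono[of "-8 * n^4" C "3^m"] by simp
  have "Q + 9 * n^4 = n^4 + 52 * n^3 - 76 * n^2 - 6 * n - 2"
    by (simp add: Q_def algebra_simps power2_eq_square power3_eq_cube power4_eq_xxxx)
  moreover have "18 * 52 * n^2 \<le> 52 * n^3" "18 * n \<le> n^2" "0 \<le> n^4"
    using n by (simp_all add: power2_eq_square power3_eq_cube)
  ultimately have "-9 * n^4 \<le> Q" using n by linarith
  have "n^4 \<le> 3^m * n^4" using mult_right_mono[of 1 "3^m" "n^4"] by simp
  moreover have "17 * (3^m * n^4) \<le> 125 * 5^m * (real m - 1)"
    using five_pow_dominates[of m] False unfolding n_def by (simp only: mult.assoc)
  moreover have "gap_kernel_coeff_num m = 125 * 5^m * (real m - 1) + 3^m * C + Q"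
    by (simp add: gap_kernel_coeff_num_def n_def C_def Q_def)
  ultimately show ?thesis
    using \<open>-8 * (3^m * n^4) \<le> 3^m * C\<close> \<open>-9 * n^4 \<le> Q\<close> by linarith
qed

lemma gap_kernel_coeff_nonneg: "0 \<le> gap_kernel_coeff n"
proof (cases "n < 4")
  case False
  then obtain m where n: "n = m + 4" by (metis add.commute le_Suc_ex not_less)
  show ?thesis
  proof (cases "even m")
    case True
    then show ?thesis using gap_kernel_coeff_even gap_kernel_coeff_num_nonneg n by simp
  qed (simp add: n gap_kernel_coeff_odd)
qed (simp add: gap_kernel_coeff_less_4)

lemma gap_kernel_nonneg: assumes "0 \<le> t" shows "0 \<le> gap_kernel t"
proof (rule sums_le[OF _ sums_zero sums_gap_kernel])
  show "0 \<le> gap_kernel_coeff n * t ^ n" for n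
    using gap_kernel_coeff_nonneg assms by simp
qed

section \<open>Lower bounds\<close>

text \<open>With u = e^g, A = u (g - 1) + 1 and B = u (u - 1 - g) one has phi g = A / (u - 1)^2 and
  1 - phi g = B / (u - 1)^2, so lower_gap is psi (phi g) g / (x (1 - x)) - 4 + ln (4 x (1 - x)) at
  x = phi g (lemma lower_gap_eq), written in closed form to be differentiated.  A' and B' below are
  the derivatives of A and B.\<close>

definition lower_gap :: "real \<Rightarrow> real" where
  "lower_gap g = g^2 * exp g * (exp g - 1)^2 / ((exp g * (g - 1) + 1) * (exp g * (exp g - 1 - g))) - 4
     + ln (4 * (exp g * (g - 1) + 1) * (exp g * (exp g - 1 - g)) / (exp g - 1)^4)"

definition gap_numerator :: "real \<Rightarrow> real" where
  "gap_numerator g = (let u = exp g; D = u - 1; A = u * (g - 1) + 1; B = u * (u - 1 - g);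
     A' = u * g; B' = u * (2 * u - 2 - g) in
     g * u * D^2 * (2 * D + g * D + 2 * g * u) * A * B - g^2 * u * D^3 * (A' * B + A * B')
     + A * B * D * (A' * B + A * B') - 4 * u * A^2 * B^2)"

lemma lower_gap_has_derivative:
  assumes "0 < g"
  shows "(lower_gap has_real_derivative gap_numerator g /
     ((exp g * (g - 1) + 1)^2 * (exp g * (exp g - 1 - g))^2 * (exp g - 1))) (at g)"
proof -
  have denom_pos: "0 < exp g - 1" "0 < exp g * (g - 1) + 1" "0 < exp g - 1 - g"
    using assms exp_mult_sub_one_add_one_pos[of g] exp_sub_one_sub_pos[of g] by auto
  then have nz: "(exp g * (g - 1) + 1) * (exp g * (exp g - 1 - g)) \<noteq> 0" "(exp g - 1)^4 \<noteq> 0"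
    and pos: "0 < 4 * (exp g * (g - 1) + 1) * (exp g * (exp g - 1 - g)) / (exp g - 1)^4"
    by auto
  show ?thesis
    unfolding lower_gap_def[abs_def]
    apply (rule derivative_eq_intros refl nz pos)+
    using denom_pos
    apply (simp add: gap_numerator_def Let_def divide_simps)
    apply algebra
    done
qed

lemma gap_numerator_double: "gap_numerator (2 * t) = 4 * exp t ^ 9 * gap_kernel t"
proof -
  define v where "v = exp t"
  have "0 < v" by (simp add: v_def)
  have ch: "cosh (5 * t) = (v ^ 5 + 1 / v ^ 5) / 2" "cosh (3 * t) = (v ^ 3 + 1 / v ^ 3) / 2"
      "cosh t = (v + 1 / v) / 2"
    using cosh_of_nat_mult[of 5 t] cosh_of_nat_mult[of 3 t] cosh_of_nat_mult[of 1 t]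
    by (simp_all add: v_def)
  have sh: "sinh (5 * t) = (v ^ 5 - 1 / v ^ 5) / 2" "sinh (3 * t) = (v ^ 3 - 1 / v ^ 3) / 2"
      "sinh t = (v - 1 / v) / 2"
    using sinh_of_nat_mult[of 5 t] sinh_of_nat_mult[of 3 t] sinh_of_nat_mult[of 1 t]
    by (simp_all add: v_def)
  have kernel: "2 * v^5 * gap_kernel t =
      -(v^10 + 1) + 3 * (v^8 + v^2) - 2 * (v^6 + v^4) + t * (v^10 - 1) + 11 * t * (v^8 - v^2)
      - 38 * t * (v^6 - v^4) - 24 * t^2 * (v^8 + v^2) + 24 * t^2 * (v^6 + v^4)
      + 20 * t^3 * (v^8 - v^2) + 4 * t^3 * (v^6 - v^4) - 8 * t^4 * (v^8 + v^2) - 8 * t^4 * (v^6 + v^4)"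
    unfolding gap_kernel_def ch sh using \<open>0 < v\<close> by (simp add: field_simps) algebra
  have exp_2t: "exp (2 * t) = v^2" using exp_of_nat_mult[of 2 t] by (simp add: v_def)
  have "gap_numerator (2 * t) = 2 * v^4 * (2 * v^5 * gap_kernel t)"
    unfolding gap_numerator_def Let_def exp_2t kernel by algebra
  then show ?thesis by (simp add: v_def)
qed

lemma gap_numerator_nonneg: "0 \<le> g \<Longrightarrow> 0 \<le> gap_numerator g"
  using gap_numerator_double[of "g / 2"] gap_kernel_nonneg[of "g / 2"] by simp

lemma lower_gap_mono: assumes "0 < a" "a \<le> g" shows "lower_gap a \<le> lower_gap g"
proof (rule DERIV_nonneg_imp_increasing_open[OF assms(2)])
  fix y assume "a < y"
  then have "0 < y" using assms by simp
  have "0 < exp y * (y - 1) + 1" "0 < exp y - 1"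
    using exp_mult_sub_one_add_one_pos[of y] \<open>0 < y\<close> by auto
  then have "0 \<le> gap_numerator y /
      ((exp y * (y - 1) + 1)^2 * (exp y * (exp y - 1 - y))^2 * (exp y - 1))"
    using gap_numerator_nonneg[of y] \<open>0 < y\<close> by simp
  then show "\<exists>z. (lower_gap has_real_derivative z) (at y) \<and> 0 \<le> z"
    using lower_gap_has_derivative[OF \<open>0 < y\<close>] by blast
next
  show "continuous_on {a..g} lower_gap"
    using assms by (intro continuous_at_imp_continuous_on ballI DERIV_isCont[OF lower_gap_has_derivative]) auto
qed

lemma lower_gap_tendsto_0: "(lower_gap \<longlongrightarrow> 0) (at_right 0)"
  unfolding lower_gap_def by real_asymp

lemma lower_gap_nonneg: assumes "0 < g" shows "0 \<le> lower_gap g"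
proof -
  have "\<forall>\<^sub>F a in at_right 0. lower_gap a \<le> lower_gap g"
    using assms unfolding eventually_at_right_field by (auto intro!: exI[of _ g] lower_gap_mono)
  then show ?thesis by (intro tendsto_upperbound[OF lower_gap_tendsto_0]) auto
qed

lemma lower_gap_eq:
  assumes "0 < g"
  shows "lower_gap g = psi (phi g) g / (phi g * (1 - phi g)) - 4 + ln (4 * (phi g * (1 - phi g)))"
proof -
  define A where "A = exp g * (g - 1) + 1"
  define B where "B = exp g * (exp g - 1 - g)"
  define D where "D = exp g - 1"
  have "0 < A" "0 < B" "0 < D"
    using assms exp_mult_sub_one_add_one_pos[of g] exp_sub_one_sub_pos[of g]
    by (auto simp: A_def B_def D_def)
  have "phi g = A / D^2" by (simp add: phi_def A_def D_def)
  moreover have "1 - phi g = B / D^2"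
  proof -
    have "1 - phi g = (D^2 - A) / D^2"
      using \<open>0 < D\<close> \<open>phi g = A / D^2\<close> by (simp add: field_simps)
    moreover have "D^2 - A = B" by (simp add: A_def B_def D_def power2_eq_square algebra_simps)
    ultimately show ?thesis by simp
  qed
  ultimately have "phi g * (1 - phi g) = A * B / D^4" by (simp add: power4_eq_xxxx power2_eq_square)
  moreover have "psi (phi g) g = g^2 * exp g / D^2"
    using psi_phi_self assms by (simp add: D_def)
  moreover have "lower_gap g = g^2 * exp g * D^2 / (A * B) - 4 + ln (4 * A * B / D^4)"
    by (simp add: lower_gap_def A_def B_def D_def)
  ultimately show ?thesis
    using \<open>0 < A\<close> \<open>0 < B\<close> \<open>0 < D\<close> by (simp add: power4_eq_xxxx power2_eq_square mult.assoc)
qed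

lemma psi_phi_lower_bound:
  assumes "0 < g"
  shows "phi g * (1 - phi g) * (4 + ln (1 / (4 * phi g * (1 - phi g)))) \<le> psi (phi g) g"
proof -
  define y where "y = phi g * (1 - phi g)"
  have "0 < y" using phi_pos[OF assms] phi_less_half[OF assms] by (simp add: y_def)
  have "4 - ln (4 * y) \<le> psi (phi g) g / y"
    using lower_gap_nonneg[OF assms] lower_gap_eq[OF assms] by (simp add: y_def)
  then have "y * (4 - ln (4 * y)) \<le> psi (phi g) g"
    using \<open>0 < y\<close> by (simp add: field_simps)
  moreover have "4 * phi g * (1 - phi g) = 4 * y" by (simp add: y_def)
  moreover have "ln (1 / (4 * y)) = - ln (4 * y)" using \<open>0 < y\<close> by (simp add: ln_div)
  ultimately show ?thesis by (simp only: y_def[symmetric]) simp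
qed

lemma lower_bounds_ordered:
  fixes x :: real assumes "0 < x" "x \<le> 1/2"
  shows "x * (2 + ln (1 / (2 * x))) \<le> x * (1 - x) * (4 + ln (1 / (4 * x * (1 - x))))"
proof -
  define K where "K y = 2 - ln 2 - 4 * y + 2 * y * ln 2 + y * ln y - (1 - y) * ln (1 - y)" for y :: real
  have K_deriv: "(K has_real_derivative -2 + 2 * ln 2 + ln y + ln (1 - y)) (at y)"
    if "0 < y" "y < 1" for y
    unfolding K_def by (rule derivative_eq_intros refl | use that in simp)+
  have "K (1/2) \<le> K x"
  proof (rule DERIV_nonpos_imp_decreasing_open[OF assms(2)])
    fix y assume y: "x < y" "y < 1/2"
    have "y * (1 - y) \<le> 1/4" using zero_le_power2[of "y - 1/2"] by (simp add: power2_eq_square algebra_simps)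
    then have "ln (y * (1 - y)) \<le> ln (1/4)" using y assms by simp
    then have "ln y + ln (1 - y) \<le> ln (1/4)" using y assms by (simp add: ln_mult)
    also have "\<dots> = - 2 * ln 2" using ln_realpow[of 2 2] by (simp add: ln_div)
    finally show "\<exists>z. (K has_real_derivative z) (at y) \<and> z \<le> 0"
      using K_deriv[of y] y assms by force
  next
    show "continuous_on {x..1/2} K"
      using assms by (intro continuous_at_imp_continuous_on ballI DERIV_isCont[OF K_deriv]) auto
  qed
  moreover have "K (1/2) = 0" by (simp add: K_def ln_div)
  ultimately have "0 \<le> x * K x" using assms by simp
  have ln_2x: "ln (1 / (2 * x)) = - ln 2 - ln x" using assms by (simp add: ln_div ln_mult)
  have ln_4x: "ln (1 / (4 * x * (1 - x))) = - (2 * ln 2) - ln x - ln (1 - x)"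
    using assms ln_realpow[of 2 2] by (simp add: ln_div ln_mult)
  have "x * (1 - x) * (4 + ln (1 / (4 * x * (1 - x)))) - x * (2 + ln (1 / (2 * x))) = x * K x"
    unfolding ln_2x ln_4x by (simp add: K_def algebra_simps)
  with \<open>0 \<le> x * K x\<close> show ?thesis by simp
qed

lemma G_bounds:
  fixes x :: real assumes "0 < x" "x \<le> 1/2"
  shows "4 * x * (1 - x) * log 2 (1 / (x * (1 - x))) \<ge> x * G (1 / x) \<and>
         x * G (1 / x) \<ge> x * (1 - x) * (4 + ln (1 / (4 * x * (1 - x)))) \<and>
         2 * x * log 2 (1 / x) \<ge> x * G (1 / x) \<and>
         x * G (1 / x) \<ge> x * (2 + ln (1 / (2 * x)))"
proof (cases "x = 1/2")
  case True
  have "log 2 4 = (2::real)" using log_nat_power[of 2 2 2] by simp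
  then show ?thesis by (simp add: True G_def)
next
  case False
  then have "x < 1/2" using assms by simp
  then obtain g where "0 < g" "phi g = x" using phi_surj assms(1) by blast
  then have "x * (1 - x) * (4 + ln (1 / (4 * x * (1 - x)))) \<le> x * G (1 / x)"
    using psi_phi_lower_bound phi_mult_G_inverse_phi by metis
  moreover have "x * G (1 / x) \<le> psi x (2 * ln (1 / (2 * x)))"
    using \<open>x < 1/2\<close> assms(1) by (intro G_le_psi) auto
  moreover have "psi x (2 * ln (1 / (2 * x))) \<le> 2 * x * log 2 (1 / x)"
    using assms(1) \<open>x < 1/2\<close> by (rule psi_two_ln_le)
  ultimately show ?thesis
    using upper_bounds_ordered[OF assms] lower_bounds_ordered[OF assms] by (intro conjI; linarith)
qed

lemma G_upper_asymptotic:
  fixes x :: real assumes "0 < x" "x < exp (-1)"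
  shows "G (1 / x) \<le> (ln (1 / x) + ln (ln (1 / x))) * (1 + 1 / (ln (1 / x) - x))"
proof -
  define L where "L = ln (1 / x)"
  have "ln x < -1" using assms ln_less_cancel_iff[of x "exp (-1)"] by simp
  then have "1 < L" using assms(1) by (simp add: L_def ln_div)
  have "x < 1/2" using assms(2) exp_minus_one_less_half by linarith
  have "0 < L + ln L" using \<open>1 < L\<close> ln_gt_zero[of L] by linarith
  have exp_h: "exp (L + ln L) - 1 = (L - x) / x"
    using assms(1) \<open>1 < L\<close> by (simp add: exp_add field_simps) (simp add: L_def)
  have "psi x (L + ln L) = x * ((L + ln L) * (1 + 1 / (L - x)))"
    unfolding psi_def exp_h using assms(1) \<open>x < 1/2\<close> \<open>1 < L\<close> by (simp add: field_simps)
  with G_le_psi[OF assms(1) \<open>x < 1/2\<close> \<open>0 < L + ln L\<close>] assms(1)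
  show ?thesis by (simp add: L_def)
qed

lemma G_asymptotic: "((\<lambda>x. G (1 / x) / ln (1 / x)) \<longlongrightarrow> 1) (at_right 0)"
proof (rule tendsto_sandwich)
  have small: "\<forall>\<^sub>F x in at_right 0. 0 < x \<and> x < exp (-1 :: real)"
    unfolding eventually_at_right_field by (auto intro!: exI[of _ "exp (-1)"])
  then show "\<forall>\<^sub>F x in at_right 0. (2 + ln (1 / (2 * x))) / ln (1 / x) \<le> G (1 / x) / ln (1 / x)"
  proof eventually_elim
    case (elim x)
    then have "x < 1/2" using exp_minus_one_less_half by linarith
    then show ?case using G_bounds[of x] elim by (intro divide_right_mono) auto
  qed
  show "\<forall>\<^sub>F x in at_right 0. G (1 / x) / ln (1 / x) \<le>
      (ln (1 / x) + ln (ln (1 / x))) * (1 + 1 / (ln (1 / x) - x)) / ln (1 / x)"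
    using small by eventually_elim
      (auto intro!: divide_right_mono G_upper_asymptotic dest: order.strict_trans[OF _ exp_minus_one_less_half])
  show "((\<lambda>x::real. (2 + ln (1 / (2 * x))) / ln (1 / x)) \<longlongrightarrow> 1) (at_right 0)"
    by real_asymp
  show "((\<lambda>x::real. (ln (1 / x) + ln (ln (1 / x))) * (1 + 1 / (ln (1 / x) - x)) / ln (1 / x))
      \<longlongrightarrow> 1) (at_right 0)"
    by real_asymp
qed

theorem corollary3p1:
  shows "(\<forall>x::real. 0 < x \<and> x \<le> 1/2 \<longrightarrow>
            4 * x * (1 - x) * log 2 (1 / (x * (1 - x))) \<ge> x * G (1 / x) \<and>
            x * G (1 / x) \<ge> x * (1 - x) * (4 + ln (1 / (4 * x * (1 - x)))) \<and>
            2 * x * log 2 (1 / x) \<ge> x * G (1 / x) \<and>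
            x * G (1 / x) \<ge> x * (2 + ln (1 / (2 * x))))
       \<and> ((\<lambda>x. G (1 / x) / ln (1 / x)) \<longlongrightarrow> 1) (at_right 0)"
  using G_bounds G_asymptotic by blast

end
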